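(* Let $A\in\mathbb{M}_n$ and let $\Omega$ be any region contained in $\mathbb{C}\setminus\sigma(A)$. Then for all $z\in\Omega$, \[s_1(R_A(z))<\sup_{\zeta\in\Omega}s_1(R_A(\zeta))\quad\text{and}\quad s_n(R_A(z))>\inf_{\zeta\in\Omega}s_n(R_A(\zeta)).\] In particular, the functions $z\mapsto s_1(R_A(z))$ and $z\mapsto s_n(R_A(z))$ are nonconstant on $\Omega$.
   Context: $\mathbb{M}_n$ is the set of $n\times n$ complex matrices, $\sigma(A)$ is the spectrum (set of eigenvalues) of $A$, and $R_A(z)=(A-zI)^{-1}$ for $z\in\mathbb{C}\setminus\sigma(A)$ is the resolvent. A region is a nonempty open connected subset of $\mathbb{C}$. For $B\in\mathbb{M}_n$, the singular values $s_1(B)\geq\cdots\geq s_n(B)$ are the nonnegative square roots of the eigenvalues of $B^*B$ in nonincreasing order. *)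

theory Defs
  imports "HOL-Analysis.Analysis"
begin

text \<open>n x n complex matrices are modelled as complex^'n^'n, with n = CARD('n).\<close>

definition mspectrum :: "complex^'n^'n \<Rightarrow> complex set" where
  "mspectrum A = {z. \<exists>v::complex^'n. v \<noteq> 0 \<and> A *v v = z *s v}"

definition resolvent :: "complex^'n^'n \<Rightarrow> complex \<Rightarrow> complex^'n^'n" where
  "resolvent A z = matrix_inv (A - mat z)"

definition conj_transpose :: "complex^'n^'n \<Rightarrow> complex^'n^'n" where
  "conj_transpose B = (\<chi> i j. cnj (B $ j $ i))"

text \<open>The (real) eigenvalues of B* B; all eigenvalues of B* B are real and nonnegative.\<close>
definition gram_eigs :: "complex^'n^'n \<Rightarrow> real set" where
  "gram_eigs B = {t. complex_of_real t \<in> mspectrum (conj_transpose B ** B)}"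

definition smax :: "complex^'n^'n \<Rightarrow> real" where
  "smax B = sqrt (Max (gram_eigs B))"

definition smin :: "complex^'n^'n \<Rightarrow> real" where
  "smin B = sqrt (Min (gram_eigs B))"

end

theory Submission
  imports Defs "HOL-Complex_Analysis.Conformal_Mappings"
begin

text \<open>
  Let \<open>s = s\<^sub>1(R(z\<^sub>0))\<close>, attained as \<open>s = \<parallel>R(z\<^sub>0) v\<^sub>0\<parallel>\<close> at a unit vector \<open>v\<^sub>0\<close>, and put
  \<open>w = R(z\<^sub>0) v\<^sub>0\<close>. The function \<open>g(z) = \<langle>w, R(z) v\<^sub>0\<rangle>\<close> is holomorphic on \<open>\<complex> - \<sigma>(A)\<close>, which
  is connected because \<open>\<sigma>(A)\<close> is finite; it satisfies \<open>|g| \<le> s \<cdot> s\<^sub>1(R)\<close> and \<open>|g(z\<^sub>0)| = s\<^sup>2\<close>, and it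
  is small far away from \<open>\<sigma>(A)\<close>. So if \<open>s\<^sub>1(R)\<close> had a local maximum at \<open>z\<^sub>0\<close>, so would \<open>|g|\<close>,
  and the maximum modulus principle would make \<open>g\<close> constant, which it is not.

  For \<open>s\<^sub>n\<close>, take a unit vector \<open>w\<^sub>0\<close> with \<open>\<parallel>R(z\<^sub>0) w\<^sub>0\<parallel> = s\<^sub>n(R(z\<^sub>0)) = m\<close> and put
  \<open>y = R(z\<^sub>0) w\<^sub>0\<close>. Since \<open>R(\<zeta>) (A - \<zeta>) y = y\<close>, the inequality \<open>s\<^sub>n(R(\<zeta>)) \<ge> m\<close> forces
  \<open>\<parallel>(A - \<zeta>) y\<parallel> \<le> 1\<close>. But \<open>(A - z\<^sub>0 \<mp> h) y = w\<^sub>0 \<mp> h y\<close>, and by the parallelogram law one of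
  these two vectors has norm \<open>> 1\<close>; so \<open>s\<^sub>n(R)\<close> has no local minimum either.

  Neither argument uses that \<open>\<Omega>\<close> is connected.
\<close>

lemma psd_quadratic_form_eq_0_imp_zero:
  fixes D :: "'a::real_inner \<Rightarrow> 'a"
  assumes lin: "linear D" and sym: "\<And>x y. D x \<bullet> y = x \<bullet> D y"
    and psd: "\<And>x. 0 \<le> x \<bullet> D x" and v: "v \<bullet> D v = 0"
  shows "D v = 0"
proof (rule ccontr)
  assume "D v \<noteq> 0"
  define a where "a = D v \<bullet> D v"
  define b where "b = D v \<bullet> D (D v)"
  have a: "a > 0" using \<open>D v \<noteq> 0\<close> by (simp add: a_def)
  have b: "b \<ge> 0" using psd by (simp add: b_def)
  have form: "(v - t *\<^sub>R D v) \<bullet> D (v - t *\<^sub>R D v) = t\<^sup>2 * b - 2 * t * a" for t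
  proof -
    have "D (v - t *\<^sub>R D v) = D v - t *\<^sub>R D (D v)"
      using lin by (simp add: linear_diff linear_scale)
    moreover have "v \<bullet> D (D v) = a" using sym[of v "D v"] by (simp add: a_def)
    moreover have "D v \<bullet> v = 0" using v by (simp add: inner_commute)
    ultimately show ?thesis
      by (simp only: inner_diff_left inner_diff_right inner_scaleR_left inner_scaleR_right)
        (simp add: v a_def b_def power2_eq_square algebra_simps)
  qed
  define t where "t = a / (b + 1)"
  have "t > 0" and "t * b < a" using a b by (simp_all add: t_def field_simps)
  moreover have "2 * t * a \<le> t * (t * b)"
    using psd[of "v - t *\<^sub>R D v"] by (simp add: form power2_eq_square)
  ultimately show False using a by (simp add: mult_le_cancel_left_pos)
qed

lemma norm_linear_le_if_le_on_sphere:
  fixes f :: "'a::real_normed_vector \<Rightarrow> 'b::real_normed_vector"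
  assumes "linear f" and "\<And>y. norm y = 1 \<Longrightarrow> norm (f y) \<le> c"
  shows "norm (f x) \<le> c * norm x"
proof (cases "x = 0")
  case False
  have "norm (f x) = norm x * norm (f (x /\<^sub>R norm x))"
    using False by (simp add: linear_scale[OF \<open>linear f\<close>])
  also have "\<dots> \<le> norm x * c" using False by (simp add: assms(2))
  finally show ?thesis by (simp add: mult.commute)
qed (simp add: linear_0[OF \<open>linear f\<close>])

lemma norm_linear_ge_if_ge_on_sphere:
  fixes f :: "'a::real_normed_vector \<Rightarrow> 'b::real_normed_vector"
  assumes "linear f" and "\<And>y. norm y = 1 \<Longrightarrow> c \<le> norm (f y)"
  shows "c * norm x \<le> norm (f x)"
proof (cases "x = 0")
  case False
  have "norm x * c \<le> norm x * norm (f (x /\<^sub>R norm x))" using False by (simp add: assms(2))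
  also have "\<dots> = norm (f x)"
    using False by (simp add: linear_scale[OF \<open>linear f\<close>])
  finally show ?thesis by (simp add: mult.commute)
qed (simp add: linear_0[OF \<open>linear f\<close>])

lemma parallelogram_law:
  fixes a b :: "'a::real_inner"
  shows "(norm (a - b))\<^sup>2 + (norm (a + b))\<^sup>2 = 2 * (norm a)\<^sup>2 + 2 * (norm b)\<^sup>2"
  by (simp add: power2_norm_eq_inner inner_add_left inner_add_right inner_diff_left
      inner_diff_right inner_commute)

section \<open>Extreme singular values as extreme values of the norm on the unit sphere\<close>

lemma inner_mult_left_cnj: "inner (a * b) (c::complex) = inner b (cnj a * c)"
  by (simp add: inner_complex_def algebra_simps)

lemma inner_matrix_vector_mult_conj_transpose:
  fixes C :: "complex^'n^'n"
  shows "(C *v x) \<bullet> y = x \<bullet> (conj_transpose C *v y)"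
proof -
  have "(C *v x) \<bullet> y = (\<Sum>i\<in>UNIV. \<Sum>j\<in>UNIV. (C$i$j * x$j) \<bullet> y$i)"
    by (simp add: inner_vec_def matrix_vector_mult_def inner_sum_left)
  also have "\<dots> = (\<Sum>j\<in>UNIV. \<Sum>i\<in>UNIV. x$j \<bullet> (cnj (C$i$j) * y$i))"
    by (subst sum.swap) (simp add: inner_mult_left_cnj)
  also have "\<dots> = x \<bullet> (conj_transpose C *v y)"
    by (simp add: inner_vec_def matrix_vector_mult_def inner_sum_right conj_transpose_def)
  finally show ?thesis .
qed

lemma conj_transpose_conj_transpose [simp]: "conj_transpose (conj_transpose B) = B"
  by (simp add: conj_transpose_def vec_eq_iff)

lemma inner_gram_left:
  fixes B :: "complex^'n^'n"
  shows "((conj_transpose B ** B) *v x) \<bullet> y = (B *v x) \<bullet> (B *v y)"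
  by (metis inner_matrix_vector_mult_conj_transpose conj_transpose_conj_transpose
      matrix_vector_mul_assoc)

lemma inner_gram_right:
  fixes B :: "complex^'n^'n"
  shows "x \<bullet> ((conj_transpose B ** B) *v y) = (B *v x) \<bullet> (B *v y)"
  by (metis inner_gram_left inner_commute)

lemma of_real_scalar_mult: "complex_of_real t *s x = t *\<^sub>R (x::complex^'n)"
  by (simp add: vec_eq_iff of_real_def)

lemma gram_eigsI:
  fixes B :: "complex^'n^'n"
  assumes "v \<noteq> 0" and "(conj_transpose B ** B) *v v = t *\<^sub>R v"
  shows "t \<in> gram_eigs B"
  using assms by (auto simp: gram_eigs_def mspectrum_def of_real_scalar_mult)

lemma gram_eigsE:
  fixes B :: "complex^'n^'n"
  assumes "t \<in> gram_eigs B"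
  obtains x where "x \<noteq> 0" "(conj_transpose B ** B) *v x = t *\<^sub>R x"
  using assms by (auto simp: gram_eigs_def mspectrum_def of_real_scalar_mult)

lemma gram_eigenvector_norm:
  fixes B :: "complex^'n^'n"
  assumes "(conj_transpose B ** B) *v x = t *\<^sub>R x"
  shows "t * (norm x)\<^sup>2 = (norm (B *v x))\<^sup>2"
  using inner_gram_left[of B x x] by (simp add: assms power2_norm_eq_inner)

lemma finite_gram_eigs: "finite (gram_eigs (B::complex^'n^'n))"
proof -
  let ?M = "conj_transpose B ** B"
  define e where "e t = (SOME x. x \<noteq> 0 \<and> ?M *v x = t *\<^sub>R x)" for t
  have e: "e t \<noteq> 0 \<and> ?M *v e t = t *\<^sub>R e t" if "t \<in> gram_eigs B" for t
    unfolding e_def by (rule someI_ex) (metis gram_eigsE[OF that])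
  have "inj_on e (gram_eigs B)"
  proof (rule inj_onI)
    fix s t assume st: "s \<in> gram_eigs B" "t \<in> gram_eigs B" "e s = e t"
    then have "s *\<^sub>R e s = t *\<^sub>R e s" using e by metis
    then show "s = t" using e[OF st(1)] by simp
  qed
  moreover have "pairwise orthogonal (e ` gram_eigs B)"
  proof (clarsimp simp: pairwise_def)
    fix s t assume st: "s \<in> gram_eigs B" "t \<in> gram_eigs B" "e s \<noteq> e t"
    have "s * (e s \<bullet> e t) = (?M *v e s) \<bullet> e t" using e[OF st(1)] by simp
    also have "\<dots> = t * (e s \<bullet> e t)"
      using e[OF st(2)] by (simp add: inner_gram_left inner_gram_right[symmetric])
    finally show "orthogonal (e s) (e t)" using st(3) by (auto simp: orthogonal_def)
  qed
  then have "finite (e ` gram_eigs B)" by (rule pairwise_orthogonal_imp_finite)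
  ultimately show ?thesis using finite_imageD by blast
qed

lemma gram_eigenvector_if_rayleigh_max:
  fixes B :: "complex^'n^'n"
  assumes le: "\<And>x. (norm (B *v x))\<^sup>2 \<le> l * (norm x)\<^sup>2"
    and eq: "(norm (B *v v))\<^sup>2 = l * (norm v)\<^sup>2"
  shows "(conj_transpose B ** B) *v v = l *\<^sub>R v"
proof -
  define D where "D x = l *\<^sub>R x - (conj_transpose B ** B) *v x" for x
  have form: "x \<bullet> D x = l * (norm x)\<^sup>2 - (norm (B *v x))\<^sup>2" for x
    by (simp add: D_def inner_diff_right inner_gram_right power2_norm_eq_inner)
  have "D v = 0"
  proof (rule psd_quadratic_form_eq_0_imp_zero[where D = D])
    show "linear D"
      unfolding D_def[abs_def]
      by (intro linear_compose_sub linear_scaleR linear_id matrix_vector_mul_linear)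
    show "D x \<bullet> y = x \<bullet> D y" for x y
      by (simp add: D_def inner_diff_left inner_diff_right inner_gram_left inner_gram_right
          inner_commute)
  qed (use le eq in \<open>simp_all add: form\<close>)
  then show ?thesis by (simp add: D_def)
qed

lemma gram_eigenvector_if_rayleigh_min:
  fixes B :: "complex^'n^'n"
  assumes ge: "\<And>x. l * (norm x)\<^sup>2 \<le> (norm (B *v x))\<^sup>2"
    and eq: "(norm (B *v v))\<^sup>2 = l * (norm v)\<^sup>2"
  shows "(conj_transpose B ** B) *v v = l *\<^sub>R v"
proof -
  define D where "D x = (conj_transpose B ** B) *v x - l *\<^sub>R x" for x
  have form: "x \<bullet> D x = (norm (B *v x))\<^sup>2 - l * (norm x)\<^sup>2" for x
    by (simp add: D_def inner_diff_right inner_gram_right power2_norm_eq_inner)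
  have "D v = 0"
  proof (rule psd_quadratic_form_eq_0_imp_zero[where D = D])
    show "linear D"
      unfolding D_def[abs_def]
      by (intro linear_compose_sub linear_scaleR linear_id matrix_vector_mul_linear)
    show "D x \<bullet> y = x \<bullet> D y" for x y
      by (simp add: D_def inner_diff_left inner_diff_right inner_gram_left inner_gram_right
          inner_commute)
  qed (use ge eq in \<open>simp_all add: form\<close>)
  then show ?thesis by (simp add: D_def)
qed

lemma Max_gram_eigs_eq:
  fixes B :: "complex^'n^'n"
  assumes le: "\<And>x. (norm (B *v x))\<^sup>2 \<le> l * (norm x)\<^sup>2"
    and "v \<noteq> 0" and eq: "(norm (B *v v))\<^sup>2 = l * (norm v)\<^sup>2"
  shows "Max (gram_eigs B) = l"
proof (rule Max_eqI[OF finite_gram_eigs])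
  show "l \<in> gram_eigs B"
    by (rule gram_eigsI[OF \<open>v \<noteq> 0\<close> gram_eigenvector_if_rayleigh_max[OF le eq]])
  fix t assume "t \<in> gram_eigs B"
  then obtain x where "x \<noteq> 0" "(conj_transpose B ** B) *v x = t *\<^sub>R x" by (rule gram_eigsE)
  then have "t * (norm x)\<^sup>2 \<le> l * (norm x)\<^sup>2" using le[of x] by (simp add: gram_eigenvector_norm)
  then show "t \<le> l" using \<open>x \<noteq> 0\<close> by simp
qed

lemma Min_gram_eigs_eq:
  fixes B :: "complex^'n^'n"
  assumes ge: "\<And>x. l * (norm x)\<^sup>2 \<le> (norm (B *v x))\<^sup>2"
    and "v \<noteq> 0" and eq: "(norm (B *v v))\<^sup>2 = l * (norm v)\<^sup>2"
  shows "Min (gram_eigs B) = l"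
proof (rule Min_eqI[OF finite_gram_eigs])
  show "l \<in> gram_eigs B"
    by (rule gram_eigsI[OF \<open>v \<noteq> 0\<close> gram_eigenvector_if_rayleigh_min[OF ge eq]])
  fix t assume "t \<in> gram_eigs B"
  then obtain x where "x \<noteq> 0" "(conj_transpose B ** B) *v x = t *\<^sub>R x" by (rule gram_eigsE)
  then have "l * (norm x)\<^sup>2 \<le> t * (norm x)\<^sup>2" using ge[of x] by (simp add: gram_eigenvector_norm)
  then show "l \<le> t" using \<open>x \<noteq> 0\<close> by simp
qed

lemma smax_maximizer:
  fixes B :: "complex^'n^'n"
  obtains v where "norm v = 1" "norm (B *v v) = smax B" "\<And>x. norm (B *v x) \<le> smax B * norm x"
proof -
  have cont: "continuous_on (sphere 0 1) (\<lambda>x. norm (B *v x))"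
    by (intro continuous_intros linear_continuous_on linear_linear[THEN iffD1]
        matrix_vector_mul_linear)
  obtain v where v: "norm v = 1" and max: "\<And>y. norm y = 1 \<Longrightarrow> norm (B *v y) \<le> norm (B *v v)"
    using continuous_attains_sup[OF compact_sphere _ cont] by auto
  have le: "norm (B *v x) \<le> norm (B *v v) * norm x" for x
    by (rule norm_linear_le_if_le_on_sphere[OF matrix_vector_mul_linear max])
  have "(norm (B *v x))\<^sup>2 \<le> (norm (B *v v))\<^sup>2 * (norm x)\<^sup>2" for x
    unfolding power_mult_distrib[symmetric] by (rule power_mono[OF le]) simp
  then have "Max (gram_eigs B) = (norm (B *v v))\<^sup>2"
    by (rule Max_gram_eigs_eq[of _ _ v]) (use v in auto)
  then have "smax B = norm (B *v v)" by (simp add: smax_def)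
  with v le show thesis by (intro that) auto
qed

lemma smin_minimizer:
  fixes B :: "complex^'n^'n"
  obtains v where "norm v = 1" "norm (B *v v) = smin B" "\<And>x. smin B * norm x \<le> norm (B *v x)"
proof -
  have cont: "continuous_on (sphere 0 1) (\<lambda>x. norm (B *v x))"
    by (intro continuous_intros linear_continuous_on linear_linear[THEN iffD1]
        matrix_vector_mul_linear)
  obtain v where v: "norm v = 1" and min: "\<And>y. norm y = 1 \<Longrightarrow> norm (B *v v) \<le> norm (B *v y)"
    using continuous_attains_inf[OF compact_sphere _ cont] by auto
  have ge: "norm (B *v v) * norm x \<le> norm (B *v x)" for x
    by (rule norm_linear_ge_if_ge_on_sphere[OF matrix_vector_mul_linear min])
  have "(norm (B *v v))\<^sup>2 * (norm x)\<^sup>2 \<le> (norm (B *v x))\<^sup>2" for x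
    unfolding power_mult_distrib[symmetric] by (rule power_mono[OF ge]) simp
  then have "Min (gram_eigs B) = (norm (B *v v))\<^sup>2"
    by (rule Min_gram_eigs_eq[of _ _ v]) (use v in auto)
  then have "smin B = norm (B *v v)" by (simp add: smin_def)
  with v ge show thesis by (intro that) auto
qed

lemma norm_matrix_vector_mult_le_smax: "norm ((B::complex^'n^'n) *v x) \<le> smax B * norm x"
  by (metis smax_maximizer)

lemma smin_le_norm_matrix_vector_mult: "smin B * norm x \<le> norm ((B::complex^'n^'n) *v x)"
  by (metis smin_minimizer)

lemma smax_nonneg: "0 \<le> smax (B::complex^'n^'n)"
  by (metis smax_maximizer norm_ge_zero)

section \<open>The resolvent\<close>

lemma mat_matrix_vector_mult: "mat z *v x = z *s (x::complex^'n)"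
  by (simp add: vec_eq_iff matrix_vector_mult_def mat_def if_distrib [of "\<lambda>x. x * y" for y]
      cong: if_cong)

lemma shifted_matrix_vector_mult: "(A - mat z) *v x = A *v x - z *s (x::complex^'n)"
  by (simp add: matrix_vector_mult_diff_rdistrib mat_matrix_vector_mult)

lemma shifted_matrix_vector_mult_add:
  "(A - mat (z + c)) *v x = (A - mat z) *v x - c *s (x::complex^'n)"
  by (simp add: shifted_matrix_vector_mult mat_matrix_vector_mult vec_eq_iff algebra_simps)

lemma norm_scalar_mult_vec: "norm (c *s x) = norm c * norm (x::complex^'n)"
  unfolding norm_vec_def by (simp add: L2_set_right_distrib norm_mult)

lemma mspectrum_iff_not_invertible: "z \<in> mspectrum A \<longleftrightarrow> \<not> invertible (A - mat z)"
  unfolding invertible_left_inverse matrix_left_invertible_ker mspectrum_def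
  by (auto simp: shifted_matrix_vector_mult)

lemma resolvent_inverse:
  fixes A :: "complex^'n^'n"
  assumes "z \<notin> mspectrum A"
  shows "(A - mat z) ** resolvent A z = mat 1" and "resolvent A z ** (A - mat z) = mat 1"
proof -
  have "\<exists>B. (A - mat z) ** B = mat 1 \<and> B ** (A - mat z) = mat 1"
    using assms by (simp add: mspectrum_iff_not_invertible invertible_def)
  then have "(A - mat z) ** resolvent A z = mat 1 \<and> resolvent A z ** (A - mat z) = mat 1"
    unfolding resolvent_def matrix_inv_def by (rule someI_ex)
  then show "(A - mat z) ** resolvent A z = mat 1" "resolvent A z ** (A - mat z) = mat 1"
    by auto
qed

lemma resolvent_solves:
  fixes A :: "complex^'n^'n"
  assumes "z \<notin> mspectrum A"
  shows "(A - mat z) *v (resolvent A z *v v) = v" and "resolvent A z *v ((A - mat z) *v v) = v"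
  using resolvent_inverse[OF assms] by (simp_all add: matrix_vector_mul_assoc)

lemma norm_eigenvalue_le_smax:
  fixes A :: "complex^'n^'n"
  assumes "z \<in> mspectrum A"
  shows "norm z \<le> smax A"
proof -
  obtain x where "x \<noteq> 0" "A *v x = z *s x" using assms by (auto simp: mspectrum_def)
  then have "norm z * norm x \<le> smax A * norm x"
    using norm_matrix_vector_mult_le_smax[of A x] by (simp add: norm_scalar_mult_vec)
  then show ?thesis using \<open>x \<noteq> 0\<close> by simp
qed

lemma norm_resolvent_le:
  fixes A :: "complex^'n^'n"
  assumes "smax A < norm z"
  shows "norm (resolvent A z *v v) \<le> norm v / (norm z - smax A)"
proof -
  have "z \<notin> mspectrum A" using assms norm_eigenvalue_le_smax by fastforce
  define y where "y = resolvent A z *v v"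
  have solves: "A *v y - z *s y = v"
    using resolvent_solves(1)[OF \<open>z \<notin> mspectrum A\<close>, of v]
    by (simp add: y_def shifted_matrix_vector_mult)
  have "z *s y = A *v y - v" unfolding solves[symmetric] by simp
  then have "norm z * norm y = norm (A *v y - v)" by (metis norm_scalar_mult_vec)
  also have "\<dots> \<le> smax A * norm y + norm v"
    using norm_triangle_ineq4[of "A *v y" v] norm_matrix_vector_mult_le_smax[of A y] by simp
  finally have "norm y * (norm z - smax A) \<le> norm v" by (simp add: algebra_simps)
  then show ?thesis using assms by (simp add: y_def pos_le_divide_eq)
qed

lemma resolvent_small_somewhere:
  fixes A :: "complex^'n^'n"
  assumes "e > 0"
  obtains z where "z \<notin> mspectrum A" and "\<And>v. norm (resolvent A z *v v) \<le> e * norm v"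
proof
  define z where "z = complex_of_real (smax A + 1 / e)"
  have nz: "norm z = smax A + 1 / e"
    unfolding z_def norm_of_real using smax_nonneg[of A] assms by simp
  then show "z \<notin> mspectrum A" using assms norm_eigenvalue_le_smax by fastforce
  show "norm (resolvent A z *v v) \<le> e * norm v" for v
    using norm_resolvent_le[of A z v] nz assms by (simp add: mult.commute)
qed

lemma det_shifted_eq_poly:
  fixes A :: "complex^'n^'n"
  shows "\<exists>p. \<forall>z. det (A - mat z) = poly p z"
proof
  let ?p = "\<Sum>\<pi>\<in>{\<pi>. \<pi> permutes (UNIV::'n set)}. smult (of_int (sign \<pi>))
      (\<Prod>i\<in>UNIV. [:A$i$(\<pi> i), if i = \<pi> i then -1 else 0:]) :: complex poly"
  have entry: "poly [:A$i$j, if i = j then -1 else 0:] z = (A - mat z)$i$j" for i j z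
    by (simp add: mat_def)
  show "\<forall>z. det (A - mat z) = poly ?p z"
    unfolding det_def poly_sum poly_smult poly_prod entry by (intro allI refl)
qed

lemma finite_mspectrum: "finite (mspectrum (A::complex^'n^'n))"
proof -
  obtain p where p: "\<And>z. det (A - mat z) = poly p z" using det_shifted_eq_poly[of A] by blast
  have spec: "mspectrum A = {z. poly p z = 0}"
    by (auto simp: mspectrum_iff_not_invertible invertible_det_nz p)
  obtain z where "z \<notin> mspectrum A" using resolvent_small_somewhere[of 1 A] by auto
  then have "p \<noteq> 0" by (auto simp: spec)
  then show ?thesis by (simp add: spec poly_roots_finite)
qed

lemma open_resolvent_set: "open (- mspectrum (A::complex^'n^'n))"
  by (simp add: finite_imp_closed finite_mspectrum open_Compl)

lemma connected_resolvent_set: "connected (- mspectrum (A::complex^'n^'n))"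
  using connected_open_delete_finite[OF open_UNIV connected_UNIV _ finite_mspectrum, of A]
  by (simp add: Compl_eq_Diff_UNIV)

lemma holomorphic_on_det:
  fixes F :: "complex \<Rightarrow> complex^'n^'n"
  assumes "\<And>i j. (\<lambda>z. F z $ i $ j) holomorphic_on S"
  shows "(\<lambda>z. det (F z)) holomorphic_on S"
  unfolding det_def by (intro holomorphic_intros assms)

lemma holomorphic_resolvent_component:
  fixes A :: "complex^'n^'n"
  shows "(\<lambda>z. (resolvent A z *v v) $ k) holomorphic_on - mspectrum A"
proof (rule holomorphic_transform)
  let ?C = "\<lambda>z. \<chi> i j. if j = k then v$i else (A - mat z)$i$j"
  have entries: "(\<lambda>z. (A - mat z)$i$j) holomorphic_on S" for i j S
    by (cases "i = j") (simp_all add: mat_def holomorphic_intros)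
  moreover have "(\<lambda>z. ?C z $ i $ j) holomorphic_on S" for i j S
    using entries[of i j] by (cases "j = k") simp_all
  ultimately show "(\<lambda>z. det (?C z) / det (A - mat z)) holomorphic_on - mspectrum A"
    by (intro holomorphic_on_divide holomorphic_on_det)
      (simp_all add: mspectrum_iff_not_invertible invertible_det_nz)
  fix z assume z: "z \<in> - mspectrum A"
  then have "det (A - mat z) \<noteq> 0" by (simp add: mspectrum_iff_not_invertible invertible_det_nz)
  from cramer[OF this, THEN iffD1, OF resolvent_solves(1)] z
  show "det (?C z) / det (A - mat z) = (resolvent A z *v v) $ k"
    by (simp add: vec_eq_iff)
qed

section \<open>Extreme singular values of the resolvent\<close>

definition cinner :: "complex^'n \<Rightarrow> complex^'n \<Rightarrow> complex" where
  "cinner w y = (\<Sum>i\<in>UNIV. cnj (w$i) * y$i)"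

lemma norm_cinner_le: "norm (cinner w y) \<le> norm w * norm y"
proof -
  have "norm (cinner w y) \<le> (\<Sum>i\<in>UNIV. \<bar>norm (w$i)\<bar> * \<bar>norm (y$i)\<bar>)"
    unfolding cinner_def by (rule order_trans[OF norm_sum]) (simp add: norm_mult)
  also have "\<dots> \<le> norm w * norm y"
    unfolding norm_vec_def by (rule L2_set_mult_ineq)
  finally show ?thesis .
qed

lemma cinner_self: "cinner w w = complex_of_real ((norm w)\<^sup>2)"
proof -
  have "(norm w)\<^sup>2 = (\<Sum>i\<in>UNIV. (norm (w$i))\<^sup>2)"
    unfolding norm_vec_def L2_set_def by (simp add: sum_nonneg)
  then have "complex_of_real ((norm w)\<^sup>2) = (\<Sum>i\<in>UNIV. complex_of_real ((norm (w$i))\<^sup>2))"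
    by simp
  also have "\<dots> = cinner w w"
    unfolding cinner_def by (rule sum.cong) (simp_all only: complex_norm_square mult.commute)
  finally show ?thesis ..
qed

lemma smax_resolvent_not_local_max:
  fixes A :: "complex^'n^'n"
  assumes "open \<Omega>" and "\<Omega> \<subseteq> - mspectrum A" and "z\<^sub>0 \<in> \<Omega>"
  shows "\<exists>\<zeta>\<in>\<Omega>. smax (resolvent A z\<^sub>0) < smax (resolvent A \<zeta>)"
proof (rule ccontr)
  define s where "s = smax (resolvent A z\<^sub>0)"
  assume "\<not> ?thesis"
  then have le_s: "smax (resolvent A \<zeta>) \<le> s" if "\<zeta> \<in> \<Omega>" for \<zeta>
    using that by (auto simp: s_def not_less)
  have z\<^sub>0: "z\<^sub>0 \<notin> mspectrum A" using assms by auto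
  obtain v where v: "norm v = 1" "norm (resolvent A z\<^sub>0 *v v) = s"
    using smax_maximizer unfolding s_def by metis
  define w where "w = resolvent A z\<^sub>0 *v v"
  have "w \<noteq> 0" using resolvent_solves(1)[OF z\<^sub>0, of v] v by (auto simp: w_def)
  then have "s > 0" by (metis v(2) w_def zero_less_norm_iff)
  define g where "g z = cinner w (resolvent A z *v v)" for z
  have g_le: "norm (g z) \<le> s * norm (resolvent A z *v v)" for z
    using norm_cinner_le[of w] v by (simp add: g_def w_def)
  have "g z\<^sub>0 = complex_of_real (s\<^sup>2)" using v by (simp add: g_def cinner_self w_def)
  then have g_z\<^sub>0: "norm (g z\<^sub>0) = s * s" by (simp add: power2_eq_square norm_mult)
  have "norm (g \<zeta>) \<le> norm (g z\<^sub>0)" if "\<zeta> \<in> \<Omega>" for \<zeta>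
  proof -
    have "norm (g \<zeta>) \<le> s * norm (resolvent A \<zeta> *v v)" by (rule g_le)
    also have "\<dots> \<le> s * smax (resolvent A \<zeta>)"
      using norm_matrix_vector_mult_le_smax[of "resolvent A \<zeta>" v] v(1) \<open>s > 0\<close>
      by (simp add: mult_left_mono)
    also have "\<dots> \<le> s * s" using le_s[OF that] \<open>s > 0\<close> by simp
    finally show ?thesis unfolding g_z\<^sub>0 .
  qed
  moreover have "g holomorphic_on - mspectrum A"
    unfolding g_def cinner_def by (intro holomorphic_intros holomorphic_resolvent_component)
  ultimately have "g constant_on - mspectrum A"
    using maximum_modulus_principle[OF _ open_resolvent_set connected_resolvent_set assms]
    by blast
  obtain z\<^sub>1 where z\<^sub>1: "z\<^sub>1 \<notin> mspectrum A" "\<And>u. norm (resolvent A z\<^sub>1 *v u) \<le> s / 2 * norm u"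
    using resolvent_small_somewhere[of "s / 2" A] \<open>s > 0\<close> by auto
  have "norm (g z\<^sub>1) \<le> s * norm (resolvent A z\<^sub>1 *v v)" by (rule g_le)
  also have "\<dots> \<le> s * (s / 2)"
    using z\<^sub>1(2)[of v] v(1) \<open>s > 0\<close> by (simp add: mult_left_mono)
  finally have "norm (g z\<^sub>1) \<le> s * (s / 2)" .
  moreover have "g z\<^sub>1 = g z\<^sub>0"
    using \<open>g constant_on - mspectrum A\<close> z\<^sub>0 z\<^sub>1(1) by (auto simp: constant_on_def)
  ultimately show False using g_z\<^sub>0 \<open>s > 0\<close> by simp
qed

lemma norm_shifted_le_one_if_smin_resolvent_ge:
  fixes A :: "complex^'n^'n"
  assumes "\<zeta> \<notin> mspectrum A" and "m > 0" and "m \<le> smin (resolvent A \<zeta>)" and "norm y = m"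
  shows "norm ((A - mat \<zeta>) *v y) \<le> 1"
proof -
  let ?x = "(A - mat \<zeta>) *v y"
  have "m * norm ?x \<le> smin (resolvent A \<zeta>) * norm ?x"
    using assms(3) by (simp add: mult_right_mono)
  also have "\<dots> \<le> norm (resolvent A \<zeta> *v ?x)" by (rule smin_le_norm_matrix_vector_mult)
  also have "\<dots> = m * 1" using resolvent_solves(2)[OF assms(1)] assms(4) by simp
  finally show ?thesis using \<open>m > 0\<close> by (simp only: mult_le_cancel_left_pos)
qed

lemma smin_resolvent_not_local_min:
  fixes A :: "complex^'n^'n"
  assumes "open \<Omega>" and "\<Omega> \<subseteq> - mspectrum A" and "z\<^sub>0 \<in> \<Omega>"
  shows "\<exists>\<zeta>\<in>\<Omega>. smin (resolvent A \<zeta>) < smin (resolvent A z\<^sub>0)"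
proof (rule ccontr)
  define m where "m = smin (resolvent A z\<^sub>0)"
  assume "\<not> ?thesis"
  then have m_le: "m \<le> smin (resolvent A \<zeta>)" if "\<zeta> \<in> \<Omega>" for \<zeta>
    using that by (auto simp: m_def not_less)
  have z\<^sub>0: "z\<^sub>0 \<notin> mspectrum A" using assms by auto
  obtain w where w: "norm w = 1" "norm (resolvent A z\<^sub>0 *v w) = m"
    using smin_minimizer unfolding m_def by metis
  define y where "y = resolvent A z\<^sub>0 *v w"
  have y: "(A - mat z\<^sub>0) *v y = w" "norm y = m"
    using resolvent_solves(1)[OF z\<^sub>0] w by (simp_all add: y_def)
  then have "y \<noteq> 0" using w(1) by auto
  then have "m > 0" using y(2) by auto
  obtain e where "e > 0" "ball z\<^sub>0 e \<subseteq> \<Omega>" using assms(1,3) open_contains_ball by blast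
  then have "z\<^sub>0 + complex_of_real t \<in> \<Omega>" if "\<bar>t\<bar> < e" for t
    using that by (auto simp: dist_norm)
  moreover have "(A - mat (z\<^sub>0 + complex_of_real t)) *v y = w - t *\<^sub>R y" for t
    by (simp only: shifted_matrix_vector_mult_add y(1) of_real_scalar_mult)
  ultimately have le_1: "norm (w - t *\<^sub>R y) \<le> 1" if "\<bar>t\<bar> < e" for t
    using norm_shifted_le_one_if_smin_resolvent_ge[OF _ \<open>m > 0\<close> m_le y(2)] that assms(2)
    by (metis ComplD subsetD)
  define h where "h = e / 2"
  have "(norm (w - h *\<^sub>R y))\<^sup>2 + (norm (w + h *\<^sub>R y))\<^sup>2 = 2 + 2 * (h * m)\<^sup>2"
    using parallelogram_law[of w "h *\<^sub>R y"] w(1) y(2) by (simp add: power_mult_distrib)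
  moreover have "(norm (w - h *\<^sub>R y))\<^sup>2 \<le> 1" "(norm (w + h *\<^sub>R y))\<^sup>2 \<le> 1"
    using le_1[of h] le_1[of "- h"] \<open>e > 0\<close> by (simp_all add: h_def power_le_one)
  ultimately have "(h * m)\<^sup>2 \<le> 0" by linarith
  then show False using \<open>e > 0\<close> \<open>m > 0\<close> by (simp add: h_def)
qed

theorem theorem12:
  fixes A :: "complex^'n^'n" and \<Omega> :: "complex set"
  assumes "open \<Omega>" and "connected \<Omega>" and "\<Omega> \<noteq> {}"
    and "\<Omega> \<subseteq> - mspectrum A"
  shows "(\<forall>z\<in>\<Omega>.
            ereal (smax (resolvent A z)) < (SUP \<zeta>\<in>\<Omega>. ereal (smax (resolvent A \<zeta>))) \<and>
            ereal (smin (resolvent A z)) > (INF \<zeta>\<in>\<Omega>. ereal (smin (resolvent A \<zeta>))))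
         \<and> \<not> (\<exists>c. \<forall>z\<in>\<Omega>. smax (resolvent A z) = c)
         \<and> \<not> (\<exists>c. \<forall>z\<in>\<Omega>. smin (resolvent A z) = c)"
proof -
  have larger: "\<exists>\<zeta>\<in>\<Omega>. smax (resolvent A z) < smax (resolvent A \<zeta>)" if "z \<in> \<Omega>" for z
    using smax_resolvent_not_local_max[OF assms(1,4) that] .
  have smaller: "\<exists>\<zeta>\<in>\<Omega>. smin (resolvent A \<zeta>) < smin (resolvent A z)" if "z \<in> \<Omega>" for z
    using smin_resolvent_not_local_min[OF assms(1,4) that] .
  obtain z\<^sub>0 where "z\<^sub>0 \<in> \<Omega>" using assms(3) by blast
  show ?thesis
  proof (intro conjI ballI notI)
    fix z assume "z \<in> \<Omega>"
    show "ereal (smax (resolvent A z)) < (SUP \<zeta>\<in>\<Omega>. ereal (smax (resolvent A \<zeta>)))"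
      using larger[OF \<open>z \<in> \<Omega>\<close>] by (auto simp: less_SUP_iff)
    show "ereal (smin (resolvent A z)) > (INF \<zeta>\<in>\<Omega>. ereal (smin (resolvent A \<zeta>)))"
      using smaller[OF \<open>z \<in> \<Omega>\<close>] by (auto simp: INF_less_iff)
  next
    assume "\<exists>c. \<forall>z\<in>\<Omega>. smax (resolvent A z) = c"
    then show False using larger \<open>z\<^sub>0 \<in> \<Omega>\<close> by fastforce
  next
    assume "\<exists>c. \<forall>z\<in>\<Omega>. smin (resolvent A z) = c"
    then show False using smaller \<open>z\<^sub>0 \<in> \<Omega>\<close> by fastforce
  qed
qed

end
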